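(* Let $Y$ and $X_1,\ldots,X_m$ be real-valued square integrable random variables on a common probability space, write $\mathbf{X}=(X_1,\ldots,X_m)$, and fix $k\in\{1,\ldots,m\}$. Then $\iota_{X_k\mid X_j,\,j\neq k}(Y)=0$ if and only if $E(Y\mid \mathbf{X})=\theta_0+\sum_{j\neq k}\theta_j X_j$ (almost surely) for some real constants $\theta_0$ and $\theta_j$, $j\neq k$.
   Context: Define the set of distributional disturbances $$\mathcal{H}_k=\{\delta(\mathbf{X})\in L^2:\ \delta:\mathbb{R}^m\to\mathbb{R}\text{ measurable},\ E[\delta(\mathbf{X})]=0,\ E[\delta^2(\mathbf{X})]=1,\ E[X_j\delta(\mathbf{X})]=0\text{ for all } j\neq k\}$$ and the partial mean impact of $X_k$ on $Y$, $$\iota_{X_k\mid X_j,\,j\neq k}(Y)=\sup_{\delta(\mathbf{X})\in\mathcal{H}_k}E[Y\delta(\mathbf{X})].$$ *)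

theory Defs
  imports "HOL-Probability.Probability"
begin

text \<open>The random vector X = (X_j)_j, indexed by a finite type 'n (so m = CARD('n)).\<close>
definition rvec :: "('n::finite \<Rightarrow> 'a \<Rightarrow> real) \<Rightarrow> 'a \<Rightarrow> real^'n" where
  "rvec X = (\<lambda>\<omega>. \<chi> j. X j \<omega>)"

definition disturbances :: "'a measure \<Rightarrow> ('n::finite \<Rightarrow> 'a \<Rightarrow> real) \<Rightarrow> 'n \<Rightarrow> ('a \<Rightarrow> real) set" where
  "disturbances M X k =
     {Z. \<exists>\<delta> :: real^'n \<Rightarrow> real. \<delta> \<in> borel_measurable borel \<and>
          Z = (\<lambda>\<omega>. \<delta> (rvec X \<omega>)) \<and>
          integrable M (\<lambda>\<omega>. (Z \<omega>)^2) \<and>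
          (\<integral>\<omega>. Z \<omega> \<partial>M) = 0 \<and>
          (\<integral>\<omega>. (Z \<omega>)^2 \<partial>M) = 1 \<and>
          (\<forall>j. j \<noteq> k \<longrightarrow> (\<integral>\<omega>. X j \<omega> * Z \<omega> \<partial>M) = 0)}"

definition partial_mean_impact :: "'a measure \<Rightarrow> ('a \<Rightarrow> real) \<Rightarrow> ('n::finite \<Rightarrow> 'a \<Rightarrow> real) \<Rightarrow> 'n \<Rightarrow> real" where
  "partial_mean_impact M Y X k =
     (if disturbances M X k = {} then 0
      else (SUP Z \<in> disturbances M X k. \<integral>\<omega>. Y \<omega> * Z \<omega> \<partial>M))"

end

theory Submission
  imports Defs
begin

(* If E(Y|X) is affine in the X_j, j \<noteq> k, then E[Y \<delta>(X)] = E[E(Y|X) \<delta>(X)] = 0 for every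
   disturbance \<delta>(X), so the impact vanishes.  Conversely, H_k is closed under negation, so a
   vanishing impact makes Y orthogonal to every disturbance and hence, after normalisation, to
   every square integrable \<delta>(X) orthogonal to 1 and to the X_j, j \<noteq> k.  Let G be the residual
   of E(Y|X) after orthogonal projection onto the span of these regressors.  Each indicator
   1_B(X) is such a \<delta>(X) plus an element of that span, so E[G 1_B(X)] = 0 for all Borel B;
   since G is X-measurable, G = 0 almost surely. *)

definition lincomb :: "'i set \<Rightarrow> ('i \<Rightarrow> real) \<Rightarrow> ('i \<Rightarrow> 'a \<Rightarrow> real) \<Rightarrow> 'a \<Rightarrow> real" where
  "lincomb I c V x = (\<Sum>i\<in>I. c i * V i x)"

locale semi_inner_space =
  fixes L :: "('a \<Rightarrow> real) set" and ip :: "('a \<Rightarrow> real) \<Rightarrow> ('a \<Rightarrow> real) \<Rightarrow> real"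
  assumes L_add: "f \<in> L \<Longrightarrow> g \<in> L \<Longrightarrow> (\<lambda>x. f x + g x) \<in> L"
    and L_scale: "f \<in> L \<Longrightarrow> (\<lambda>x. c * f x) \<in> L"
    and L_zero: "(\<lambda>x. 0) \<in> L"
    and ip_add_left: "f \<in> L \<Longrightarrow> g \<in> L \<Longrightarrow> h \<in> L \<Longrightarrow> ip (\<lambda>x. f x + g x) h = ip f h + ip g h"
    and ip_scale_left: "f \<in> L \<Longrightarrow> g \<in> L \<Longrightarrow> ip (\<lambda>x. c * f x) g = c * ip f g"
    and ip_sym: "f \<in> L \<Longrightarrow> g \<in> L \<Longrightarrow> ip f g = ip g f"
    and ip_self_nonneg: "f \<in> L \<Longrightarrow> ip f f \<ge> 0"
begin

lemma L_diff_scale: "f \<in> L \<Longrightarrow> g \<in> L \<Longrightarrow> (\<lambda>x. f x - a * g x) \<in> L"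
  using L_add[of f "\<lambda>x. (- a) * g x"] L_scale[of g "- a"] by simp

lemmas L_diff = L_diff_scale[where a=1, simplified]

lemma ip_diff_scale_left:
  "f \<in> L \<Longrightarrow> g \<in> L \<Longrightarrow> h \<in> L \<Longrightarrow> ip (\<lambda>x. f x - a * g x) h = ip f h - a * ip g h"
  using ip_add_left[of f "\<lambda>x. (- a) * g x" h] ip_scale_left[of g h "- a"] L_scale[of g "- a"] by simp

lemma ip_diff_left: "f \<in> L \<Longrightarrow> g \<in> L \<Longrightarrow> h \<in> L \<Longrightarrow> ip (\<lambda>x. f x - g x) h = ip f h - ip g h"
  using ip_diff_scale_left[where a=1] by simp

lemma lincomb_in_L: "(\<And>i. i \<in> I \<Longrightarrow> V i \<in> L) \<Longrightarrow> lincomb I c V \<in> L"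
  unfolding lincomb_def
proof (induction I rule: infinite_finite_induct)
  case (insert i I)
  then show ?case using L_add[OF L_scale[of "V i" "c i"], of "\<lambda>x. \<Sum>i\<in>I. c i * V i x"] by simp
qed (use L_zero in simp_all)

lemma ip_lincomb_left:
  "(\<And>i. i \<in> I \<Longrightarrow> V i \<in> L) \<Longrightarrow> h \<in> L \<Longrightarrow> ip (lincomb I c V) h = (\<Sum>i\<in>I. c i * ip (V i) h)"
  unfolding lincomb_def
proof (induction I rule: infinite_finite_induct)
  case (insert i I)
  have "ip (\<lambda>x. c i * V i x + (\<Sum>i\<in>I. c i * V i x)) h = c i * ip (V i) h + ip (\<lambda>x. \<Sum>i\<in>I. c i * V i x) h"
    using insert.prems ip_add_left[OF L_scale[of "V i"] lincomb_in_L[of I V c, unfolded lincomb_def]]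
      ip_scale_left[of "V i" h] by simp
  then show ?case using insert by simp
qed (use ip_scale_left[OF L_zero, of h 0] in simp_all)

lemma ip_lincomb_orthogonal:
  assumes "\<And>i. i \<in> I \<Longrightarrow> V i \<in> L" "f \<in> L" "\<And>i. i \<in> I \<Longrightarrow> ip f (V i) = 0"
  shows "ip f (lincomb I c V) = 0"
proof -
  have "ip f (lincomb I c V) = ip (lincomb I c V) f"
    using ip_sym[OF assms(2) lincomb_in_L[OF assms(1)]] .
  also have "\<dots> = (\<Sum>i\<in>I. c i * ip (V i) f)"
    using ip_lincomb_left[OF assms(1,2)] .
  also have "\<dots> = 0" using assms ip_sym by (simp add: sum.neutral)
  finally show ?thesis .
qed

lemma ip_self_diff_scale:
  assumes f: "f \<in> L" and g: "g \<in> L"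
  shows "ip (\<lambda>x. f x - t * g x) (\<lambda>x. f x - t * g x) = ip f f - 2 * t * ip f g + t\<^sup>2 * ip g g"
proof -
  define d where "d = (\<lambda>x. f x - t * g x)"
  have d: "d \<in> L" unfolding d_def using f g L_diff_scale by blast
  have "ip d d = ip d f - t * ip d g"
    using ip_diff_scale_left[OF f g d] ip_sym[OF f d] ip_sym[OF g d] by (simp add: d_def)
  also have "\<dots> = ip f f - 2 * t * ip f g + t\<^sup>2 * ip g g"
    using ip_diff_scale_left[OF f g f, of t] ip_diff_scale_left[OF f g g, of t] ip_sym[OF f g]
    unfolding d_def by (simp add: power2_eq_square right_diff_distrib)
  finally show ?thesis by (simp add: d_def)
qed

lemma ip_le_half_sum_squares:
  assumes "f \<in> L" "g \<in> L"
  shows "ip f g \<le> (ip f f + ip g g) / 2"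
  using ip_self_nonneg[OF L_diff[OF assms]] ip_self_diff_scale[OF assms, of 1] by simp

text \<open>Degenerate Cauchy--Schwarz: otherwise \<open>f - t g\<close> has negative square for a suitable \<open>t\<close>.\<close>
lemma ip_eq_0_if_self_eq_0:
  assumes f: "f \<in> L" and g: "g \<in> L" and gg: "ip g g = 0"
  shows "ip f g = 0"
proof (rule ccontr)
  assume fg: "ip f g \<noteq> 0"
  define t where "t = (ip f f + 1) / (2 * ip f g)"
  have "0 \<le> ip (\<lambda>x. f x - t * g x) (\<lambda>x. f x - t * g x)"
    using ip_self_nonneg L_diff_scale f g by blast
  also have "\<dots> = ip f f - 2 * t * ip f g + t\<^sup>2 * ip g g"
    by (rule ip_self_diff_scale[OF f g])
  also have "\<dots> = -1"
    using gg fg by (simp add: t_def field_simps)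
  finally show False by simp
qed

lemma orthogonal_projection_exists:
  assumes "finite I" "\<And>i. i \<in> I \<Longrightarrow> V i \<in> L" "f \<in> L"
  shows "\<exists>c. \<forall>i\<in>I. ip (\<lambda>x. f x - lincomb I c V x) (V i) = 0"
  using assms
proof (induction I arbitrary: f rule: finite_induct)
  case empty
  then show ?case by simp
next
  case (insert i I)
  have VL: "\<And>j. j \<in> I \<Longrightarrow> V j \<in> L" "V i \<in> L" using insert.prems by auto
  obtain c where c: "\<forall>j\<in>I. ip (\<lambda>x. f x - lincomb I c V x) (V j) = 0"
    using insert.IH[OF VL(1) insert.prems(2)] by blast
  obtain d where d: "\<forall>j\<in>I. ip (\<lambda>x. V i x - lincomb I d V x) (V j) = 0"
    using insert.IH[OF VL] by blast
  define R where "R = (\<lambda>x. f x - lincomb I c V x)"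
  define U where "U = (\<lambda>x. V i x - lincomb I d V x)"
  have dL: "lincomb I d V \<in> L" using lincomb_in_L VL(1) .
  have RL: "R \<in> L" unfolding R_def using L_diff[OF insert.prems(2) lincomb_in_L[OF VL(1)]] .
  have UL: "U \<in> L" unfolding U_def using L_diff[OF VL(2) dL] .
  have RV: "ip R (V j) = 0" and UV: "ip U (V j) = 0" if "j \<in> I" for j
    using c d that by (simp_all add: R_def U_def)
  have Vi: "V i = (\<lambda>x. U x + lincomb I d V x)" by (simp add: U_def)
  have ip_Vi: "ip W (V i) = ip W U" if W: "W \<in> L" "\<And>j. j \<in> I \<Longrightarrow> ip W (V j) = 0" for W
  proof -
    have "ip W (V i) = ip (\<lambda>x. U x + lincomb I d V x) W"
      using ip_sym[OF W(1) VL(2)] Vi by simp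
    also have "\<dots> = ip W U + ip W (lincomb I d V)"
      using ip_add_left[OF UL dL W(1)] ip_sym[OF UL W(1)] ip_sym[OF dL W(1)] by simp
    finally show ?thesis using ip_lincomb_orthogonal[OF VL(1) W] by simp
  qed
  have RVi: "ip R (V i) = ip R U" and UVi: "ip U (V i) = ip U U"
    using ip_Vi[OF RL RV] ip_Vi[OF UL UV] by simp_all
  define \<alpha> where "\<alpha> = ip R U / ip U U"
    \<comment> \<open>division by zero gives \<open>\<alpha> = 0\<close> when \<open>ip U U = 0\<close>; this is fine since then \<open>ip R U = 0\<close>\<close>
  have \<alpha>: "ip R U - \<alpha> * ip U U = 0"
    using ip_eq_0_if_self_eq_0[OF RL UL] by (cases "ip U U = 0") (simp_all add: \<alpha>_def)
  define c' where "c' = (\<lambda>j. c j - \<alpha> * d j)(i := \<alpha>)"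
  have eq: "(\<lambda>x. f x - lincomb (insert i I) c' V x) = (\<lambda>x. R x - \<alpha> * U x)"
  proof
    fix x
    have "lincomb (insert i I) c' V x = \<alpha> * V i x + (\<Sum>j\<in>I. (c j - \<alpha> * d j) * V j x)"
      using insert.hyps unfolding lincomb_def c'_def by (auto intro!: sum.cong)
    also have "\<dots> = \<alpha> * V i x + lincomb I c V x - \<alpha> * lincomb I d V x"
      by (simp add: lincomb_def left_diff_distrib sum_subtractf sum_distrib_left mult.assoc)
    finally show "f x - lincomb (insert i I) c' V x = R x - \<alpha> * U x"
      by (simp add: R_def U_def right_diff_distrib)
  qed
  have "ip (\<lambda>x. R x - \<alpha> * U x) (V j) = 0" if j: "j \<in> insert i I" for j
  proof -
    have "V j \<in> L" using j VL by blast
    then have "ip (\<lambda>x. R x - \<alpha> * U x) (V j) = ip R (V j) - \<alpha> * ip U (V j)"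
      by (rule ip_diff_scale_left[OF RL UL])
    also have "\<dots> = 0"
    proof (cases "j = i")
      case True
      then show ?thesis using RVi UVi \<alpha> by simp
    next
      case False
      then show ?thesis using j RV UV by simp
    qed
    finally show ?thesis .
  qed
  then have "\<forall>j\<in>insert i I. ip (\<lambda>x. f x - lincomb (insert i I) c' V x) (V j) = 0"
    unfolding eq by blast
  then show ?case by blast
qed

end

definition L2 :: "'a measure \<Rightarrow> ('a \<Rightarrow> real) set" where
  "L2 M = {f. f \<in> borel_measurable M \<and> integrable M (\<lambda>x. (f x)\<^sup>2)}"

definition inner_L2 :: "'a measure \<Rightarrow> ('a \<Rightarrow> real) \<Rightarrow> ('a \<Rightarrow> real) \<Rightarrow> real" where
  "inner_L2 M f g = (\<integral>x. f x * g x \<partial>M)"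

lemma integrable_mult_L2:
  assumes "f \<in> L2 M" "g \<in> L2 M"
  shows "integrable M (\<lambda>x. f x * g x)"
proof (rule Bochner_Integration.integrable_bound[where f="\<lambda>x. (f x)\<^sup>2 + (g x)\<^sup>2"])
  show "integrable M (\<lambda>x. (f x)\<^sup>2 + (g x)\<^sup>2)" "(\<lambda>x. f x * g x) \<in> borel_measurable M"
    using assms by (auto simp: L2_def)
  have "\<bar>a * b\<bar> \<le> a\<^sup>2 + b\<^sup>2" for a b :: real
  proof -
    have "2 * (\<bar>a\<bar> * \<bar>b\<bar>) \<le> a\<^sup>2 + b\<^sup>2"
      using sum_squares_bound[of "\<bar>a\<bar>" "\<bar>b\<bar>"] by (simp add: mult.assoc)
    moreover have "0 \<le> \<bar>a\<bar> * \<bar>b\<bar>" by simp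
    ultimately show ?thesis unfolding abs_mult by linarith
  qed
  then show "AE x in M. norm (f x * g x) \<le> norm ((f x)\<^sup>2 + (g x)\<^sup>2)"
    by simp
qed

lemma semi_inner_space_L2: "semi_inner_space (L2 M) (inner_L2 M)"
proof
  fix f g h :: "'a \<Rightarrow> real" and c :: real
  assume f: "f \<in> L2 M"
  show "(\<lambda>x. c * f x) \<in> L2 M" using f by (auto simp: L2_def power_mult_distrib)
  show "inner_L2 M f f \<ge> 0" by (simp add: inner_L2_def)
  assume g: "g \<in> L2 M"
  have "integrable M (\<lambda>x. (f x)\<^sup>2 + (g x)\<^sup>2 + 2 * (f x * g x))"
    using f g integrable_mult_L2[OF f g] by (auto simp: L2_def)
  then show "(\<lambda>x. f x + g x) \<in> L2 M" using f g by (auto simp: L2_def power2_sum mult.assoc)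
  show "inner_L2 M (\<lambda>x. c * f x) g = c * inner_L2 M f g" by (simp add: inner_L2_def mult.assoc)
  show "inner_L2 M f g = inner_L2 M g f" by (simp add: inner_L2_def mult.commute)
  assume h: "h \<in> L2 M"
  show "inner_L2 M (\<lambda>x. f x + g x) h = inner_L2 M f h + inner_L2 M g h"
    using integrable_mult_L2[OF f h] integrable_mult_L2[OF g h] by (simp add: inner_L2_def distrib_right)
qed (simp add: L2_def)

context sigma_finite_subalgebra
begin

lemma real_cond_exp_in_L2:
  assumes "integrable M f" "integrable M (\<lambda>x. (f x)\<^sup>2)"
  shows "real_cond_exp M F f \<in> L2 M"
proof -
  have "integrable M (\<lambda>x. (real_cond_exp M F f x)\<^sup>2)"
    by (rule integrable_convex_cond_exp[where I=UNIV]) (use assms convex_power2 in auto)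
  then show ?thesis by (simp add: L2_def)
qed

lemma inner_L2_real_cond_exp:
  assumes "f \<in> L2 M" "g \<in> L2 M" "g \<in> borel_measurable F"
  shows "inner_L2 M (real_cond_exp M F f) g = inner_L2 M f g"
proof -
  have "integrable M (\<lambda>x. g x * f x)" using integrable_mult_L2 assms(1,2) by (subst mult.commute) blast
  then have "(\<integral>x. g x * real_cond_exp M F f x \<partial>M) = (\<integral>x. g x * f x \<partial>M)"
    using assms by (intro real_cond_exp_intg(2)) (auto simp: L2_def)
  then show ?thesis by (simp add: inner_L2_def mult.commute)
qed

lemma AE_eq_0_if_set_integrals_eq_0:
  fixes f :: "'a \<Rightarrow> real"
  assumes "integrable M f" "f \<in> borel_measurable F" "\<And>A. A \<in> sets F \<Longrightarrow> (\<integral>x\<in>A. f x \<partial>M) = 0"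
  shows "AE x in M. f x = 0"
proof -
  have "AE x in M. real_cond_exp M F f x = 0"
    using assms by (intro real_cond_exp_charact) auto
  moreover have "AE x in M. real_cond_exp M F f x = f x"
    using assms by (intro real_cond_exp_F_meas)
  ultimately show ?thesis by eventually_elim simp
qed

end

interpretation L2: semi_inner_space "L2 M" "inner_L2 M" for M :: "'a measure"
  by (rule semi_inner_space_L2)

text \<open>The regressors of the partial model: \<open>None\<close> is the constant \<open>1\<close>, \<open>Some j\<close> the coordinate \<open>X\<^sub>j\<close>.\<close>

definition regressor :: "'n option \<Rightarrow> real^'n \<Rightarrow> real" where
  "regressor a v = (case a of None \<Rightarrow> 1 | Some j \<Rightarrow> v $ j)"

definition regressor_index :: "'n \<Rightarrow> 'n option set" where
  "regressor_index k = insert None (Some ` (UNIV - {k}))"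

lemma regressor_measurable [measurable]: "regressor a \<in> borel_measurable borel"
  by (cases a) (auto simp: regressor_def[abs_def])

lemma finite_regressor_index [simp]: "finite (regressor_index (k :: 'n :: finite))"
  by (simp add: regressor_index_def)

lemma lincomb_regressors:
  "lincomb (regressor_index k) c (\<lambda>a \<omega>. regressor a (rvec X \<omega>)) \<omega>
     = c None + (\<Sum>j\<in>UNIV - {k}. c (Some j) * X j \<omega>)"
proof -
  have "(\<Sum>a\<in>Some ` (UNIV - {k}). c a * regressor a (rvec X \<omega>)) = (\<Sum>j\<in>UNIV - {k}. c (Some j) * X j \<omega>)"
    by (subst sum.reindex) (auto simp: regressor_def rvec_def)
  moreover have "None \<notin> Some ` (UNIV - {k})" by auto
  ultimately show ?thesis
    by (simp add: lincomb_def regressor_index_def regressor_def)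
qed

lemma ex_option_fun_iff: "(\<exists>c. P (c None) (\<lambda>j. c (Some j))) \<longleftrightarrow> (\<exists>a f. P a f)"
proof
  assume "\<exists>a f. P a f"
  then obtain a f where "P a f" by blast
  then show "\<exists>c. P (c None) (\<lambda>j. c (Some j))" by (intro exI[of _ "case_option a f"]) simp
qed blast

lemma rvec_measurable:
  assumes "\<And>j. X j \<in> borel_measurable M"
  shows "rvec X \<in> borel_measurable M"
  unfolding rvec_def
  apply (subst borel_measurable_euclidean_space)
  using assms by (auto simp: Basis_vec_def inner_axis)

lemma uminus_disturbance:
  assumes "Z \<in> disturbances M X k"
  shows "(\<lambda>\<omega>. - Z \<omega>) \<in> disturbances M X k"
proof -
  obtain \<delta> where "\<delta> \<in> borel_measurable borel" "Z = (\<lambda>\<omega>. \<delta> (rvec X \<omega>))"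
    and "integrable M (\<lambda>\<omega>. (Z \<omega>)\<^sup>2)" "(\<integral>\<omega>. Z \<omega> \<partial>M) = 0" "(\<integral>\<omega>. (Z \<omega>)\<^sup>2 \<partial>M) = 1"
    and "\<forall>j. j \<noteq> k \<longrightarrow> (\<integral>\<omega>. X j \<omega> * Z \<omega> \<partial>M) = 0"
    using assms unfolding disturbances_def by blast
  then show ?thesis
    unfolding disturbances_def by (intro CollectI exI[of _ "\<lambda>v. - \<delta> v"]) auto
qed

locale regression_model = prob_space M for M :: "'a measure" +
  fixes X :: "'n::finite \<Rightarrow> 'a \<Rightarrow> real" and k :: 'n
  assumes X_measurable [measurable]: "\<And>j. X j \<in> borel_measurable M"
    and X_square_integrable: "\<And>j. integrable M (\<lambda>\<omega>. (X j \<omega>)\<^sup>2)"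
begin

abbreviation sigma_X :: "'a measure" where
  "sigma_X \<equiv> vimage_algebra (space M) (rvec X) borel"

abbreviation regr :: "'n option \<Rightarrow> 'a \<Rightarrow> real" where
  "regr a \<equiv> \<lambda>\<omega>. regressor a (rvec X \<omega>)"

lemma sets_sigma_X: "sets sigma_X = {rvec X -` B \<inter> space M | B. B \<in> sets borel}"
  by (rule sets_vimage_algebra2) simp

lemma subalgebra_sigma_X: "subalgebra M sigma_X"
  using sets_sigma_X measurable_sets[OF rvec_measurable[OF X_measurable]]
  by (auto simp: subalgebra_def)

sublocale sigma_finite_subalgebra M sigma_X
  by (rule finite_measure_subalgebra_is_sigma_finite, unfold_locales) (rule subalgebra_sigma_X)

lemma comp_rvec_measurable_sigma_X:
  "\<delta> \<in> borel_measurable borel \<Longrightarrow> (\<lambda>\<omega>. \<delta> (rvec X \<omega>)) \<in> borel_measurable sigma_X"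
  using measurable_compose[OF measurable_vimage_algebra1[of "rvec X" "space M" borel]] by simp

lemma borel_measurable_sigma_X_imp_M:
  "f \<in> borel_measurable sigma_X \<Longrightarrow> f \<in> borel_measurable M"
  by (rule measurable_from_subalg[OF subalgebra_sigma_X])

lemma regr_sigma_X_measurable: "regr a \<in> borel_measurable sigma_X"
  by (rule comp_rvec_measurable_sigma_X) simp

lemma regr_L2: "regr a \<in> L2 M"
proof (cases a)
  case None
  then show ?thesis by (simp add: L2_def regressor_def)
next
  case (Some j)
  then have "regr a = X j" by (simp add: regressor_def rvec_def)
  then show ?thesis using X_square_integrable by (simp add: L2_def)
qed

lemma disturbances_iff:
  "Z \<in> disturbances M X k \<longleftrightarrow>
     (\<exists>\<delta>\<in>borel_measurable borel. Z = (\<lambda>\<omega>. \<delta> (rvec X \<omega>))) \<and> Z \<in> L2 M \<and>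
     inner_L2 M Z Z = 1 \<and> (\<forall>a\<in>regressor_index k. inner_L2 M Z (regr a) = 0)"
proof -
  have "(\<forall>a\<in>regressor_index k. inner_L2 M Z (regr a) = 0) \<longleftrightarrow>
        (\<integral>\<omega>. Z \<omega> \<partial>M) = 0 \<and> (\<forall>j. j \<noteq> k \<longrightarrow> (\<integral>\<omega>. X j \<omega> * Z \<omega> \<partial>M) = 0)"
    by (auto simp: regressor_index_def inner_L2_def regressor_def rvec_def mult.commute)
  moreover have "Z \<in> L2 M \<longleftrightarrow> integrable M (\<lambda>\<omega>. (Z \<omega>)\<^sup>2)" if "Z = (\<lambda>\<omega>. \<delta> (rvec X \<omega>))"
    "\<delta> \<in> borel_measurable borel" for \<delta>
    using that borel_measurable_sigma_X_imp_M[OF comp_rvec_measurable_sigma_X] by (auto simp: L2_def)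
  ultimately show ?thesis
    unfolding disturbances_def by (auto simp: inner_L2_def power2_eq_square)
qed

lemma disturbance_L2_orthogonal:
  assumes "Z \<in> disturbances M X k"
  shows "Z \<in> L2 M" "Z \<in> borel_measurable sigma_X" "\<And>a. a \<in> regressor_index k \<Longrightarrow> inner_L2 M Z (regr a) = 0"
  using assms comp_rvec_measurable_sigma_X by (auto simp: disturbances_iff)

lemma impact_zero_if_cond_exp_linear:
  assumes Y: "Y \<in> L2 M"
    and lin: "AE \<omega> in M. real_cond_exp M sigma_X Y \<omega> = lincomb (regressor_index k) c regr \<omega>"
  shows "partial_mean_impact M Y X k = 0"
proof -
  have Q: "lincomb (regressor_index k) c regr \<in> L2 M"
    by (rule L2.lincomb_in_L[where V=regr, OF regr_L2])
  have "inner_L2 M Y Z = 0" if Z: "Z \<in> disturbances M X k" for Z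
  proof -
    note Z' = disturbance_L2_orthogonal[OF Z]
    have "inner_L2 M Y Z = inner_L2 M (real_cond_exp M sigma_X Y) Z"
      using inner_L2_real_cond_exp[OF Y Z'(1,2)] by simp
    also have "\<dots> = inner_L2 M (lincomb (regressor_index k) c regr) Z"
      unfolding inner_L2_def using lin Z'(1) Q
      by (intro integral_cong_AE) (auto simp: L2_def intro: borel_measurable_sigma_X_imp_M)
    also have "\<dots> = 0"
      using L2.ip_lincomb_orthogonal[where V=regr, OF regr_L2 Z'(1) Z'(3)] L2.ip_sym[OF Q Z'(1)] by simp
    finally show ?thesis .
  qed
  then have "(SUP Z\<in>disturbances M X k. \<integral>\<omega>. Y \<omega> * Z \<omega> \<partial>M) = (SUP Z\<in>disturbances M X k. 0)"
    by (intro SUP_cong) (simp_all add: inner_L2_def)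
  then show ?thesis by (simp add: partial_mean_impact_def)
qed

text \<open>The disturbances form a bounded set closed under negation, so a supremum \<open>0\<close> forces all values to be \<open>0\<close>.\<close>
lemma inner_disturbance_eq_0_if_impact_zero:
  assumes Y: "Y \<in> L2 M" and impact: "partial_mean_impact M Y X k = 0"
    and Z: "Z \<in> disturbances M X k"
  shows "inner_L2 M Y Z = 0"
proof -
  let ?H = "disturbances M X k" and ?f = "\<lambda>Z. inner_L2 M Y Z"
  have bound: "?f W \<le> (inner_L2 M Y Y + 1) / 2" if "W \<in> ?H" for W
    using L2.ip_le_half_sum_squares[OF Y disturbance_L2_orthogonal(1)[OF that]] that
    by (simp add: disturbances_iff)
  have "?H \<noteq> {}" using Z by blast
  then have "Sup (?f ` ?H) = 0"
    using impact by (simp add: partial_mean_impact_def inner_L2_def)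
  moreover have "bdd_above (?f ` ?H)"
    using bound by (intro bdd_aboveI2) blast
  ultimately have le: "?f W \<le> 0" if "W \<in> ?H" for W
    using cSUP_upper[OF that] by metis
  have "?f (\<lambda>\<omega>. - Z \<omega>) = - ?f Z"
    by (simp add: inner_L2_def)
  then show ?thesis
    using le[OF Z] le[OF uminus_disturbance[OF Z]] by simp
qed

lemma inner_residual_eq_0_if_impact_zero:
  assumes Y: "Y \<in> L2 M" and impact: "partial_mean_impact M Y X k = 0"
    and \<delta>: "\<delta> \<in> borel_measurable borel" and r: "(\<lambda>\<omega>. \<delta> (rvec X \<omega>)) \<in> L2 M"
    and orth: "\<And>a. a \<in> regressor_index k \<Longrightarrow> inner_L2 M (\<lambda>\<omega>. \<delta> (rvec X \<omega>)) (regr a) = 0"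
  shows "inner_L2 M Y (\<lambda>\<omega>. \<delta> (rvec X \<omega>)) = 0"
proof (cases "inner_L2 M (\<lambda>\<omega>. \<delta> (rvec X \<omega>)) (\<lambda>\<omega>. \<delta> (rvec X \<omega>)) = 0")
  case True
  then show ?thesis by (rule L2.ip_eq_0_if_self_eq_0[OF Y r])
next
  case False
  let ?r = "\<lambda>\<omega>. \<delta> (rvec X \<omega>)"
  define s where "s = sqrt (inner_L2 M ?r ?r)"
  have s: "s > 0" "s * s = inner_L2 M ?r ?r"
    using False L2.ip_self_nonneg[OF r] by (simp_all add: s_def)
  let ?Z = "\<lambda>\<omega>. (1 / s) * ?r \<omega>"
  have ZL: "?Z \<in> L2 M" using L2.L_scale[OF r] .
  have Z_scale: "inner_L2 M ?Z g = (1 / s) * inner_L2 M ?r g" if "g \<in> L2 M" for g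
    by (rule L2.ip_scale_left[OF r that])
  have "inner_L2 M ?Z ?Z = (1 / s) * inner_L2 M ?Z ?r"
    using Z_scale[OF ZL] L2.ip_sym[OF r ZL] by simp
  also have "\<dots> = 1"
    using Z_scale[OF r] s False by simp
  finally have "inner_L2 M ?Z ?Z = 1" .
  moreover have "inner_L2 M ?Z (regr a) = 0" if "a \<in> regressor_index k" for a
    using Z_scale[OF regr_L2] orth[OF that] by simp
  moreover have "\<exists>\<delta>'\<in>borel_measurable borel. ?Z = (\<lambda>\<omega>. \<delta>' (rvec X \<omega>))"
    using \<delta> by (intro bexI[of _ "\<lambda>v. (1 / s) * \<delta> v"]) simp_all
  ultimately have "?Z \<in> disturbances M X k"
    using ZL by (simp add: disturbances_iff)
  then have "inner_L2 M Y ?Z = 0"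
    by (rule inner_disturbance_eq_0_if_impact_zero[OF Y impact])
  then show ?thesis
    using Z_scale[OF Y] L2.ip_sym[OF Y ZL] L2.ip_sym[OF Y r] s(1) by simp
qed

text \<open>An indicator \<open>1\<^sub>B(X)\<close> differs from a residual of the regressors only by a linear combination of them.\<close>
lemma inner_indicator_eq_0_if_orthogonal_to_residuals:
  assumes G: "G \<in> L2 M" "\<And>a. a \<in> regressor_index k \<Longrightarrow> inner_L2 M G (regr a) = 0"
    and residuals: "\<And>\<delta>. \<delta> \<in> borel_measurable borel \<Longrightarrow> (\<lambda>\<omega>. \<delta> (rvec X \<omega>)) \<in> L2 M \<Longrightarrow>
        (\<And>a. a \<in> regressor_index k \<Longrightarrow> inner_L2 M (\<lambda>\<omega>. \<delta> (rvec X \<omega>)) (regr a) = 0) \<Longrightarrow>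
        inner_L2 M G (\<lambda>\<omega>. \<delta> (rvec X \<omega>)) = 0"
    and B: "B \<in> sets borel"
  shows "inner_L2 M G (\<lambda>\<omega>. indicator B (rvec X \<omega>)) = 0"
proof -
  let ?I = "regressor_index k" and ?D = "\<lambda>\<omega>. indicator B (rvec X \<omega>) :: real"
  have "?D \<in> borel_measurable M"
    using B by (intro borel_measurable_sigma_X_imp_M comp_rvec_measurable_sigma_X) simp
  moreover have "integrable M (\<lambda>\<omega>. (?D \<omega>)\<^sup>2)"
    using calculation by (intro integrable_const_bound[where B=1]) (auto simp: indicator_def)
  ultimately have D: "?D \<in> L2 M" by (simp add: L2_def)
  obtain e where e: "\<And>a. a \<in> ?I \<Longrightarrow> inner_L2 M (\<lambda>\<omega>. ?D \<omega> - lincomb ?I e regr \<omega>) (regr a) = 0"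
    using L2.orthogonal_projection_exists[where V=regr, OF finite_regressor_index regr_L2 D] by blast
  define \<delta> where "\<delta> v = indicator B v - lincomb ?I e regressor v" for v
  have r_eq: "(\<lambda>\<omega>. \<delta> (rvec X \<omega>)) = (\<lambda>\<omega>. ?D \<omega> - lincomb ?I e regr \<omega>)"
    by (simp add: \<delta>_def lincomb_def)
  have Q: "lincomb ?I e regr \<in> L2 M" by (rule L2.lincomb_in_L[where V=regr, OF regr_L2])
  have r: "(\<lambda>\<omega>. \<delta> (rvec X \<omega>)) \<in> L2 M" unfolding r_eq using L2.L_diff[OF D Q] .
  have \<delta>: "\<delta> \<in> borel_measurable borel" using B unfolding \<delta>_def[abs_def] lincomb_def by measurable
  have "inner_L2 M (\<lambda>\<omega>. \<delta> (rvec X \<omega>)) (regr a) = 0" if "a \<in> ?I" for a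
    using e[OF that] by (simp only: r_eq)
  then have "inner_L2 M G (\<lambda>\<omega>. \<delta> (rvec X \<omega>)) = 0"
    by (rule residuals[OF \<delta> r])
  moreover have "inner_L2 M G (lincomb ?I e regr) = 0"
    using L2.ip_lincomb_orthogonal[where V=regr, OF regr_L2 G] .
  moreover have "inner_L2 M G ?D = inner_L2 M G (\<lambda>\<omega>. \<delta> (rvec X \<omega>)) + inner_L2 M G (lincomb ?I e regr)"
    unfolding r_eq inner_L2_def using integrable_mult_L2[OF G(1) D] integrable_mult_L2[OF G(1) Q]
    by (simp add: right_diff_distrib)
  ultimately show ?thesis by simp
qed

lemma AE_eq_0_if_orthogonal_to_indicators:
  assumes G: "G \<in> L2 M" "G \<in> borel_measurable sigma_X"
    and orth: "\<And>B. B \<in> sets borel \<Longrightarrow> inner_L2 M G (\<lambda>\<omega>. indicator B (rvec X \<omega>)) = 0"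
  shows "AE \<omega> in M. G \<omega> = 0"
proof (rule AE_eq_0_if_set_integrals_eq_0[OF _ G(2)])
  show "integrable M G"
    using G(1) unfolding L2_def by (blast intro: square_integrable_imp_integrable)
  fix A assume "A \<in> sets sigma_X"
  then obtain B where B: "B \<in> sets borel" "A = rvec X -` B \<inter> space M"
    unfolding sets_sigma_X by blast
  have "(\<integral>\<omega>\<in>A. G \<omega> \<partial>M) = inner_L2 M G (\<lambda>\<omega>. indicator B (rvec X \<omega>))"
    unfolding set_lebesgue_integral_def inner_L2_def B(2)
    by (rule Bochner_Integration.integral_cong) (auto simp: indicator_def)
  then show "(\<integral>\<omega>\<in>A. G \<omega> \<partial>M) = 0" using orth[OF B(1)] by simp
qed

lemma cond_exp_linear_if_impact_zero:
  assumes Y: "Y \<in> L2 M" and impact: "partial_mean_impact M Y X k = 0"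
  shows "\<exists>c. AE \<omega> in M. real_cond_exp M sigma_X Y \<omega> = lincomb (regressor_index k) c regr \<omega>"
proof -
  let ?I = "regressor_index k" and ?C = "real_cond_exp M sigma_X Y"
  have "integrable M Y" using Y unfolding L2_def by (blast intro: square_integrable_imp_integrable)
  then have C: "?C \<in> L2 M" using Y by (intro real_cond_exp_in_L2) (auto simp: L2_def)
  obtain c where c: "\<And>a. a \<in> ?I \<Longrightarrow> inner_L2 M (\<lambda>\<omega>. ?C \<omega> - lincomb ?I c regr \<omega>) (regr a) = 0"
    using L2.orthogonal_projection_exists[where V=regr, OF finite_regressor_index regr_L2 C] by blast
  let ?G = "\<lambda>\<omega>. ?C \<omega> - lincomb ?I c regr \<omega>"
  have Q: "lincomb ?I c regr \<in> L2 M" by (rule L2.lincomb_in_L[where V=regr, OF regr_L2])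
  have G: "?G \<in> L2 M" using L2.L_diff[OF C Q] .
  have "?G \<in> borel_measurable sigma_X"
    using regr_sigma_X_measurable by (simp add: lincomb_def)
  moreover have "inner_L2 M ?G (\<lambda>\<omega>. indicator B (rvec X \<omega>)) = 0" if B: "B \<in> sets borel" for B
  proof (rule inner_indicator_eq_0_if_orthogonal_to_residuals[OF G c _ B])
    fix \<delta> :: "real^'n \<Rightarrow> real"
    let ?r = "\<lambda>\<omega>. \<delta> (rvec X \<omega>)"
    assume \<delta>: "\<delta> \<in> borel_measurable borel" and r: "?r \<in> L2 M"
      and orth: "\<And>a. a \<in> ?I \<Longrightarrow> inner_L2 M ?r (regr a) = 0"
    have "inner_L2 M ?G ?r = inner_L2 M ?C ?r - inner_L2 M (lincomb ?I c regr) ?r"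
      by (rule L2.ip_diff_left[OF C Q r])
    also have "inner_L2 M ?C ?r = inner_L2 M Y ?r"
      by (rule inner_L2_real_cond_exp[OF Y r comp_rvec_measurable_sigma_X[OF \<delta>]])
    also have "\<dots> = 0"
      by (rule inner_residual_eq_0_if_impact_zero[OF Y impact \<delta> r orth])
    also have "inner_L2 M (lincomb ?I c regr) ?r = 0"
      using L2.ip_lincomb_orthogonal[where V=regr, OF regr_L2 r orth] L2.ip_sym[OF Q r] by simp
    finally show "inner_L2 M ?G ?r = 0" by simp
  qed
  ultimately have "AE \<omega> in M. ?G \<omega> = 0"
    by (intro AE_eq_0_if_orthogonal_to_indicators[OF G])
  then show ?thesis by (auto elim: AE_mp)
qed

end

theorem theorem2:
  fixes M :: "'a measure" and Y :: "'a \<Rightarrow> real"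
    and X :: "'n::finite \<Rightarrow> 'a \<Rightarrow> real" and k :: 'n
  assumes "prob_space M"
    and "Y \<in> borel_measurable M" and "integrable M (\<lambda>\<omega>. (Y \<omega>)^2)"
    and "\<And>j. X j \<in> borel_measurable M"
    and "\<And>j. integrable M (\<lambda>\<omega>. (X j \<omega>)^2)"
  shows "partial_mean_impact M Y X k = 0 \<longleftrightarrow>
    (\<exists>\<theta>0 (\<theta> :: 'n \<Rightarrow> real).
       AE \<omega> in M. real_cond_exp M (vimage_algebra (space M) (rvec X) borel) Y \<omega>
                  = \<theta>0 + (\<Sum>j \<in> UNIV - {k}. \<theta> j * X j \<omega>))"
proof -
  interpret regression_model M X k
    using assms by (intro regression_model.intro regression_model_axioms.intro)
  have Y: "Y \<in> L2 M" using assms(2,3) by (simp add: L2_def)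
  let ?C = "real_cond_exp M sigma_X Y"
  have "partial_mean_impact M Y X k = 0 \<longleftrightarrow>
      (\<exists>c. AE \<omega> in M. ?C \<omega> = c None + (\<Sum>j \<in> UNIV - {k}. c (Some j) * X j \<omega>))"
    using impact_zero_if_cond_exp_linear[OF Y] cond_exp_linear_if_impact_zero[OF Y]
    unfolding lincomb_regressors by blast
  also have "\<dots> \<longleftrightarrow> (\<exists>\<theta>0 \<theta>. AE \<omega> in M. ?C \<omega> = \<theta>0 + (\<Sum>j \<in> UNIV - {k}. \<theta> j * X j \<omega>))"
    by (rule ex_option_fun_iff)
  finally show ?thesis .
qed

end
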